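(* Let $D$ be a centrally finite division algebra and let $R=D[t_1,\ldots,t_n]$ be the ring of polynomials in $n$ central commuting variables over $D$. Then for every finite subset $A$ of $R$, the subring $S=D[A]$ of $R$ generated by $D\cup A$ is centrally normalizable over $D$.
   Context: All rings are associative with unity. A division algebra is centrally finite if it is finite-dimensional over its center. A ring $S$ containing $D$ is finite over a subring $R'$ if $S$ is finitely generated as a left $R'$-module. Commuting elements $a_1,\ldots,a_m\in S$ are (left) algebraically independent over $D$ if the monomials $a_1^{i_1}\cdots a_m^{i_m}$ are left linearly independent over $D$. $S$ is centrally normalizable over $D$ if there exist $m\ge0$ and commuting elements $a_1,\ldots,a_m\in S$ with $a_ib=ba_i$ for all $b\in D$, which are left algebraically independent over $D$, and such that $S$ is finite over the subring $D[a_1,\ldots,a_m]$ generated by $D\cup\{a_1,\ldots,a_m\}$. *)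

theory Defs
  imports Main "HOL-Library.Poly_Mapping"
begin

definition center :: "'a::ring_1 set" where
  "center = {z. \<forall>x. z * x = x * z}"

definition centrally_finite :: "'a::division_ring itself \<Rightarrow> bool" where
  "centrally_finite _ \<longleftrightarrow>
     (\<exists>B::'a set. finite B \<and>
        (\<forall>d::'a. \<exists>c. (\<forall>b\<in>B. c b \<in> center) \<and> d = (\<Sum>b\<in>B. c b * b)))"

(* Polynomials over D in central commuting variables t_0, t_1, ...:
   a polynomial is a finitely supported map from monomials (exponent vectors
   nat \<Rightarrow>\<^sub>0 nat) to coefficients; multiplication is convolution. *)
type_synonym 'a mpoly = "(nat \<Rightarrow>\<^sub>0 nat) \<Rightarrow>\<^sub>0 'a"

definition const :: "'a::zero \<Rightarrow> 'a mpoly" where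
  "const d = Poly_Mapping.single 0 d"

definition var :: "nat \<Rightarrow> 'a::{zero,one} mpoly" where
  "var i = Poly_Mapping.single (Poly_Mapping.single i 1) 1"

(* R = D[t_0,...,t_{n-1}]: polynomials involving only the first n variables *)
definition poly_ring :: "nat \<Rightarrow> ('a::division_ring) mpoly set" where
  "poly_ring n = {p. \<forall>m\<in>Poly_Mapping.keys p. \<forall>i\<in>Poly_Mapping.keys m. i < n}"

inductive_set gen_subring :: "('a::ring_1) mpoly set \<Rightarrow> 'a mpoly set"
  for A :: "'a mpoly set" where
  gen_const: "const d \<in> gen_subring A"
| gen_elem: "a \<in> A \<Longrightarrow> a \<in> gen_subring A"
| gen_add: "p \<in> gen_subring A \<Longrightarrow> q \<in> gen_subring A \<Longrightarrow> p + q \<in> gen_subring A"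
| gen_neg: "p \<in> gen_subring A \<Longrightarrow> - p \<in> gen_subring A"
| gen_mult: "p \<in> gen_subring A \<Longrightarrow> q \<in> gen_subring A \<Longrightarrow> p * q \<in> gen_subring A"

definition monomial_in :: "nat \<Rightarrow> (nat \<Rightarrow> 'a::monoid_mult) \<Rightarrow> (nat \<Rightarrow> nat) \<Rightarrow> 'a" where
  "monomial_in m a e = prod_list (map (\<lambda>i. a i ^ e i) [0..<m])"

(* a_0,...,a_{m-1} are left algebraically independent over D:
   the monomials are left linearly independent over D (embedded as constants) *)
definition alg_indep :: "nat \<Rightarrow> (nat \<Rightarrow> ('a::ring_1) mpoly) \<Rightarrow> bool" where
  "alg_indep m a \<longleftrightarrow>
     (\<forall>c :: (nat \<Rightarrow> nat) \<Rightarrow> 'a.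
        finite {e. c e \<noteq> 0} \<longrightarrow>
        (\<forall>e. c e \<noteq> 0 \<longrightarrow> (\<forall>i\<ge>m. e i = 0)) \<longrightarrow>
        (\<Sum>e\<in>{e. c e \<noteq> 0}. const (c e) * monomial_in m a e) = 0 \<longrightarrow>
        (\<forall>e. c e = 0))"

definition finite_over :: "('a::ring_1) set \<Rightarrow> 'a set \<Rightarrow> bool" where
  "finite_over S R' \<longleftrightarrow>
     (\<exists>F. finite F \<and> F \<subseteq> S \<and>
        (\<forall>s\<in>S. \<exists>r. (\<forall>f\<in>F. r f \<in> R') \<and> s = (\<Sum>f\<in>F. r f * f)))"

definition centrally_normalizable :: "('a::ring_1) mpoly set \<Rightarrow> bool" where
  "centrally_normalizable S \<longleftrightarrow>
     (\<exists>m. \<exists>a :: nat \<Rightarrow> 'a mpoly.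
        (\<forall>i<m. a i \<in> S) \<and>
        (\<forall>i<m. \<forall>j<m. a i * a j = a j * a i) \<and>
        (\<forall>i<m. \<forall>b. a i * const b = const b * a i) \<and>
        alg_indep m a \<and>
        finite_over S (gen_subring (a ` {..<m})))"

end

theory Submission
  imports Defs
begin

text \<open>
  Let \<open>S = D[A]\<close>. Among the elements of \<open>S\<close> with coefficient \<open>1\<close> at a fixed monomial \<open>\<mu>\<close>,
  one \<open>e\<close> of minimal support commutes with every \<open>d \<in> D\<close>: otherwise \<open>d e d\<inverse> - e\<close> is a
  nonzero element of \<open>S\<close> with support inside that of \<open>e\<close> and coefficient \<open>0\<close> at \<open>\<mu>\<close>, and
  subtracting a suitable multiple of it from \<open>e\<close> shrinks the support. Since the variables are
  central, \<open>e\<close> is then central in \<open>R\<close>; subtracting such elements one monomial at a time shows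
  that \<open>S\<close> is generated over \<open>D\<close> by finitely many central elements.

  For central generators \<open>z\<^sub>0, \<dots>, z\<^sub>l\<close> Nagata's proof of Noether normalization goes through
  unchanged: after the substitution \<open>w\<^sub>j = z\<^sub>j - z\<^sub>0 ^ N ^ j\<close> with \<open>N\<close> large, an algebraic
  relation among the \<open>z\<^sub>i\<close> becomes monic in \<open>z\<^sub>0\<close> over \<open>D[w\<^sub>1, \<dots>, w\<^sub>l]\<close>, so \<open>S\<close> is finite
  over \<open>D[w\<^sub>1, \<dots>, w\<^sub>l]\<close>, and one inducts on \<open>l\<close>.
\<close>

lemma update_eq_add_single:
  "Poly_Mapping.lookup f a = 0 \<Longrightarrow> Poly_Mapping.update a b f = f + Poly_Mapping.single a b"
  by (rule poly_mapping_eqI) (auto simp: lookup_update lookup_add lookup_single when_def)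

lemma poly_mapping_add_single_induct [case_names zero add]:
  assumes "P 0"
    and "\<And>f a b. Poly_Mapping.lookup f a = 0 \<Longrightarrow> P f \<Longrightarrow> P (f + Poly_Mapping.single a b)"
  shows "P f"
  using assms
  by (induction f rule: Poly_Mapping.update_induct) (auto simp: update_eq_add_single in_keys_iff)

lemma const_mult_single: "const d * Poly_Mapping.single a b = Poly_Mapping.single a (d * b)"
  unfolding const_def by (simp add: mult_single)

lemma single_mult_const: "Poly_Mapping.single a b * const d = Poly_Mapping.single a (b * d)"
  unfolding const_def by (simp add: mult_single)

lemma const_mult_const: "const a * const b = const (a * b)"
  unfolding const_def by (simp add: mult_single)

lemma const_zero [simp]: "const 0 = 0"
  unfolding const_def by simp

lemma const_one [simp]: "const 1 = 1"
  unfolding const_def by simp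

lemma const_eq_0_iff [simp]: "const d = 0 \<longleftrightarrow> d = 0"
  unfolding const_def by (metis lookup_single_eq lookup_zero single_zero)

lemma lookup_const_mult:
  "Poly_Mapping.lookup (const d * (p :: 'a::ring_1 mpoly)) k = d * Poly_Mapping.lookup p k"
  by (induction p rule: poly_mapping_add_single_induct)
    (auto simp: distrib_left lookup_add const_mult_single lookup_single when_def)

lemma lookup_mult_const:
  "Poly_Mapping.lookup ((p :: 'a::ring_1 mpoly) * const d) k = Poly_Mapping.lookup p k * d"
  by (induction p rule: poly_mapping_add_single_induct)
    (auto simp: distrib_right lookup_add single_mult_const lookup_single when_def)

lemma single_one_mult_commute:
  "Poly_Mapping.single m 1 * (p :: 'a::ring_1 mpoly) = p * Poly_Mapping.single m 1"
  by (induction p rule: poly_mapping_add_single_induct)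
    (auto simp: distrib_left distrib_right mult_single add.commute)

lemma centerD: "z \<in> center \<Longrightarrow> z * x = x * z"
  unfolding center_def by blast

lemma center_power: "z \<in> center \<Longrightarrow> z ^ k \<in> center"
  unfolding center_def by (simp add: power_commuting_commutes)

lemma center_diff: "z \<in> center \<Longrightarrow> y \<in> center \<Longrightarrow> z - y \<in> center"
  unfolding center_def by (simp add: left_diff_distrib right_diff_distrib)

lemma center_if_commute_const:
  fixes z :: "'a::ring_1 mpoly"
  assumes "\<And>d. z * const d = const d * z"
  shows "z \<in> center"
  unfolding center_def mem_Collect_eq
proof
  fix p :: "'a mpoly"
  show "z * p = p * z"
  proof (induction p rule: poly_mapping_add_single_induct)
    case (add f a b)
    have "Poly_Mapping.single a b = const b * Poly_Mapping.single a 1"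
      by (simp add: const_mult_single)
    then have "z * Poly_Mapping.single a b = Poly_Mapping.single a b * z"
      by (metis assms mult.assoc single_one_mult_commute)
    with add show ?case by (simp add: distrib_left distrib_right)
  qed simp
qed


lemma gen_subring_zero: "0 \<in> gen_subring X"
  using gen_const[of 0 X] by simp

lemma gen_subring_one: "1 \<in> gen_subring X"
  using gen_const[of 1 X] by simp

lemma gen_subring_diff: "p \<in> gen_subring X \<Longrightarrow> q \<in> gen_subring X \<Longrightarrow> p - q \<in> gen_subring X"
  by (metis diff_conv_add_uminus gen_add gen_neg)

lemma gen_subring_power: "p \<in> gen_subring X \<Longrightarrow> p ^ k \<in> gen_subring X"
  by (induction k) (auto intro: gen_subring_one gen_mult)

lemma gen_subring_least:
  assumes "\<And>d. const d \<in> T" "X \<subseteq> T" "\<And>p q. p \<in> T \<Longrightarrow> q \<in> T \<Longrightarrow> p + q \<in> T"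
    "\<And>p. p \<in> T \<Longrightarrow> - p \<in> T" "\<And>p q. p \<in> T \<Longrightarrow> q \<in> T \<Longrightarrow> p * q \<in> T"
  shows "gen_subring X \<subseteq> T"
proof
  fix x assume "x \<in> gen_subring X"
  then show "x \<in> T"
    by (induction rule: gen_subring.induct) (use assms in auto)
qed

lemma gen_subring_subset: "X \<subseteq> gen_subring Y \<Longrightarrow> gen_subring X \<subseteq> gen_subring Y"
  by (rule gen_subring_least) (auto intro: gen_subring.intros)

lemma gen_subring_mono: "X \<subseteq> Y \<Longrightarrow> gen_subring X \<subseteq> gen_subring Y"
  by (rule gen_subring_subset) (auto intro: gen_elem)


section \<open>Central generators\<close>

lemma obtain_smaller_support:
  fixes e b :: "'a::division_ring mpoly"
  assumes "b \<noteq> 0" and b_e: "Poly_Mapping.keys b \<subseteq> Poly_Mapping.keys e"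
  obtains c where "Poly_Mapping.keys (e - const c * b) \<subset> Poly_Mapping.keys e"
proof -
  obtain \<nu> where \<nu>: "\<nu> \<in> Poly_Mapping.keys b"
    using \<open>b \<noteq> 0\<close> by (metis ex_in_conv keys_eq_empty)
  define c where "c = Poly_Mapping.lookup e \<nu> * inverse (Poly_Mapping.lookup b \<nu>)"
  have lookup_diff: "Poly_Mapping.lookup (e - const c * b) k =
      Poly_Mapping.lookup e k - c * Poly_Mapping.lookup b k" for k
    by (simp add: lookup_minus lookup_const_mult)
  have "\<nu> \<notin> Poly_Mapping.keys (e - const c * b)"
    using \<nu> unfolding in_keys_iff lookup_diff by (simp add: c_def mult.assoc)
  moreover have "Poly_Mapping.keys (e - const c * b) \<subseteq> Poly_Mapping.keys e"
    using b_e unfolding subset_iff in_keys_iff lookup_diff by auto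
  ultimately have "Poly_Mapping.keys (e - const c * b) \<subset> Poly_Mapping.keys e"
    using \<nu> b_e by blast
  then show ?thesis
    by (rule that)
qed

lemma minimal_support_commute_const:
  fixes e :: "'a::division_ring mpoly"
  assumes e: "e \<in> gen_subring A" "Poly_Mapping.lookup e \<mu> = 1"
    and minimal: "\<And>y. y \<in> gen_subring A \<Longrightarrow> Poly_Mapping.lookup y \<mu> = 1 \<Longrightarrow>
      \<not> Poly_Mapping.keys y \<subset> Poly_Mapping.keys e"
  shows "e * const d = const d * e"
proof (cases "d = 0")
  case False
  define b where "b = const d * e * const (inverse d) - e"
  have lookup_b: "Poly_Mapping.lookup b k =
      d * Poly_Mapping.lookup e k * inverse d - Poly_Mapping.lookup e k" for k
    unfolding b_def by (simp add: lookup_minus lookup_mult_const lookup_const_mult)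
  have "b = 0"
  proof (rule ccontr)
    assume "b \<noteq> 0"
    moreover have "Poly_Mapping.keys b \<subseteq> Poly_Mapping.keys e"
      by (auto simp: in_keys_iff lookup_b)
    ultimately obtain c where c: "Poly_Mapping.keys (e - const c * b) \<subset> Poly_Mapping.keys e"
      by (rule obtain_smaller_support)
    have "b \<in> gen_subring A"
      unfolding b_def using e by (intro gen_subring_diff gen_mult gen_const)
    then have "e - const c * b \<in> gen_subring A"
      using e by (intro gen_subring_diff gen_mult gen_const)
    moreover have "Poly_Mapping.lookup (e - const c * b) \<mu> = 1"
      using e False by (simp add: lookup_minus lookup_const_mult lookup_b)
    ultimately show False
      using minimal c by blast
  qed
  then have "const d * e * const (inverse d) * const d = e * const d"
    by (simp add: b_def)
  with False show ?thesis
    by (simp add: mult.assoc const_mult_const)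
qed simp

lemma obtain_normalized_central_element:
  fixes s :: "'a::division_ring mpoly"
  assumes s: "s \<in> gen_subring A" "Poly_Mapping.lookup s \<mu> \<noteq> 0"
  obtains e where "e \<in> gen_subring A" "e \<in> center" "Poly_Mapping.lookup e \<mu> = 1"
    "Poly_Mapping.keys e \<subseteq> Poly_Mapping.keys s"
proof -
  let ?Q = "\<lambda>e. e \<in> gen_subring A \<and> Poly_Mapping.lookup e \<mu> = 1 \<and>
    Poly_Mapping.keys e \<subseteq> Poly_Mapping.keys s"
  define e0 where "e0 = const (inverse (Poly_Mapping.lookup s \<mu>)) * s"
  have "?Q e0"
  proof (intro conjI)
    show "e0 \<in> gen_subring A"
      unfolding e0_def using s(1) by (intro gen_mult gen_const)
    show "Poly_Mapping.lookup e0 \<mu> = 1"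
      unfolding e0_def using s(2) by (simp add: lookup_const_mult)
    show "Poly_Mapping.keys e0 \<subseteq> Poly_Mapping.keys s"
      unfolding e0_def by (auto simp: in_keys_iff lookup_const_mult)
  qed
  then obtain e where e: "?Q e"
    and least: "\<And>y. ?Q y \<Longrightarrow> card (Poly_Mapping.keys e) \<le> card (Poly_Mapping.keys y)"
    using ex_has_least_nat[of ?Q e0 "\<lambda>e. card (Poly_Mapping.keys e)"] by blast
  have "\<not> Poly_Mapping.keys y \<subset> Poly_Mapping.keys e"
    if "y \<in> gen_subring A" "Poly_Mapping.lookup y \<mu> = 1" for y
  proof
    assume smaller: "Poly_Mapping.keys y \<subset> Poly_Mapping.keys e"
    then have "card (Poly_Mapping.keys y) < card (Poly_Mapping.keys e)"
      by (rule psubset_card_mono[OF finite_keys])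
    moreover have "?Q y"
      using that smaller e by auto
    ultimately show False
      using least[of y] by simp
  qed
  then have "e * const d = const d * e" for d
    using e by (intro minimal_support_commute_const) auto
  then show ?thesis
    using e center_if_commute_const that by blast
qed

lemma keys_cancel_coefficient:
  fixes s e :: "'a::ring_1 mpoly"
  assumes "Poly_Mapping.lookup e \<mu> = 1" "Poly_Mapping.keys e \<subseteq> Poly_Mapping.keys s"
  shows "Poly_Mapping.keys (s - const (Poly_Mapping.lookup s \<mu>) * e) \<subseteq> Poly_Mapping.keys s - {\<mu>}"
proof
  fix k assume "k \<in> Poly_Mapping.keys (s - const (Poly_Mapping.lookup s \<mu>) * e)"
  then have k: "Poly_Mapping.lookup s k \<noteq> Poly_Mapping.lookup s \<mu> * Poly_Mapping.lookup e k"
    by (simp add: in_keys_iff lookup_minus lookup_const_mult)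
  have "k \<in> Poly_Mapping.keys s"
  proof (rule ccontr)
    assume "k \<notin> Poly_Mapping.keys s"
    moreover from this have "k \<notin> Poly_Mapping.keys e"
      using assms(2) by blast
    ultimately show False
      using k by (simp add: in_keys_iff)
  qed
  moreover have "k \<noteq> \<mu>"
    using k assms(1) by (metis mult_1_right)
  ultimately show "k \<in> Poly_Mapping.keys s - {\<mu>}"
    by blast
qed

lemma mem_gen_subring_central_generators:
  fixes A :: "'a::division_ring mpoly set"
  assumes "finite T" "s \<in> gen_subring A" "Poly_Mapping.keys s \<subseteq> T"
  shows "\<exists>Z. finite Z \<and> Z \<subseteq> gen_subring A \<inter> center \<and> s \<in> gen_subring Z"
  using assms
proof (induction T arbitrary: s rule: finite_induct)
  case empty
  then have "s = 0"
    by simp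
  then show ?case
    using gen_subring_zero[of "{}"] by blast
next
  case (insert \<mu> T)
  show ?case
  proof (cases "Poly_Mapping.lookup s \<mu> = 0")
    case True
    with insert.prems have "Poly_Mapping.keys s \<subseteq> T"
      by (auto simp: in_keys_iff)
    then show ?thesis
      using insert.IH[OF insert.prems(1)] by blast
  next
    case False
    obtain e where e: "e \<in> gen_subring A" "e \<in> center" "Poly_Mapping.lookup e \<mu> = 1"
      "Poly_Mapping.keys e \<subseteq> Poly_Mapping.keys s"
      using obtain_normalized_central_element[OF insert.prems(1) False] .
    define s' where "s' = s - const (Poly_Mapping.lookup s \<mu>) * e"
    have "s' \<in> gen_subring A"
      unfolding s'_def using insert.prems e by (intro gen_subring_diff gen_mult gen_const)
    moreover have "Poly_Mapping.keys s' \<subseteq> T"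
      using keys_cancel_coefficient[OF e(3,4)] insert.prems(2) unfolding s'_def by blast
    ultimately obtain Z where Z: "finite Z" "Z \<subseteq> gen_subring A \<inter> center" "s' \<in> gen_subring Z"
      using insert.IH by blast
    have "s' \<in> gen_subring (insert e Z)" "e \<in> gen_subring (insert e Z)"
      using Z gen_subring_mono[of Z "insert e Z"] by (auto intro: gen_elem)
    moreover have "s = s' + const (Poly_Mapping.lookup s \<mu>) * e"
      by (simp add: s'_def)
    ultimately have "s \<in> gen_subring (insert e Z)"
      by (metis gen_add gen_mult gen_const)
    then show ?thesis
      using Z e by (intro exI[of _ "insert e Z"]) simp
  qed
qed

lemma gen_subring_central_generators:
  fixes A :: "'a::division_ring mpoly set"
  assumes "finite A"
  obtains Z where "finite Z" "Z \<subseteq> center" "gen_subring Z = gen_subring A"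
proof -
  have "\<exists>Z. finite Z \<and> Z \<subseteq> gen_subring A \<inter> center \<and> x \<in> gen_subring Z" if "x \<in> A" for x
    using that by (intro mem_gen_subring_central_generators[of "Poly_Mapping.keys x"])
      (auto intro: gen_elem)
  then obtain Zx where Zx: "\<And>x. x \<in> A \<Longrightarrow>
      finite (Zx x) \<and> Zx x \<subseteq> gen_subring A \<inter> center \<and> x \<in> gen_subring (Zx x)"
    by metis
  define Z where "Z = (\<Union>x\<in>A. Zx x)"
  have "A \<subseteq> gen_subring Z"
  proof
    fix x assume "x \<in> A"
    then have "gen_subring (Zx x) \<subseteq> gen_subring Z"
      by (intro gen_subring_mono) (auto simp: Z_def)
    with Zx[OF \<open>x \<in> A\<close>] show "x \<in> gen_subring Z"
      by blast
  qed
  moreover have "Z \<subseteq> gen_subring A"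
    using Zx by (auto simp: Z_def)
  ultimately have "gen_subring Z = gen_subring A"
    by (intro equalityI gen_subring_subset)
  moreover have "finite Z" "Z \<subseteq> center"
    using Zx assms by (auto simp: Z_def)
  ultimately show ?thesis
    using that by blast
qed


section \<open>Finite generation as a left module\<close>

definition lspan :: "'b::ring_1 set \<Rightarrow> 'b set \<Rightarrow> 'b set" where
  "lspan R F = {s. \<exists>r. (\<forall>f\<in>F. r f \<in> R) \<and> s = (\<Sum>f\<in>F. r f * f)}"

lemma finite_over_iff_lspan:
  "finite_over S R \<longleftrightarrow> (\<exists>F. finite F \<and> F \<subseteq> S \<and> S \<subseteq> lspan R F)"
  unfolding finite_over_def lspan_def by blast

lemma lspan_zero: "0 \<in> lspan (gen_subring X) F"
  unfolding lspan_def by (auto intro!: exI[of _ "\<lambda>_. 0"] gen_subring_zero)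

lemma lspan_add:
  assumes "x \<in> lspan (gen_subring X) F" "y \<in> lspan (gen_subring X) F"
  shows "x + y \<in> lspan (gen_subring X) F"
proof -
  obtain r1 where r1: "\<forall>f\<in>F. r1 f \<in> gen_subring X" "x = (\<Sum>f\<in>F. r1 f * f)"
    using assms(1) unfolding lspan_def by blast
  obtain r2 where r2: "\<forall>f\<in>F. r2 f \<in> gen_subring X" "y = (\<Sum>f\<in>F. r2 f * f)"
    using assms(2) unfolding lspan_def by blast
  show ?thesis
    unfolding lspan_def using r1 r2
    by (auto intro!: exI[of _ "\<lambda>f. r1 f + r2 f"] gen_add simp: distrib_right sum.distrib)
qed

lemma lspan_lmult:
  assumes "q \<in> gen_subring X" "x \<in> lspan (gen_subring X) F"
  shows "q * x \<in> lspan (gen_subring X) F"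
proof -
  obtain r where r: "\<forall>f\<in>F. r f \<in> gen_subring X" "x = (\<Sum>f\<in>F. r f * f)"
    using assms(2) unfolding lspan_def by blast
  show ?thesis
    unfolding lspan_def using r assms(1)
    by (auto intro!: exI[of _ "\<lambda>f. q * r f"] gen_mult simp: sum_distrib_left mult.assoc)
qed

lemma lspan_term:
  assumes "finite F" "f \<in> F" "q \<in> gen_subring X"
  shows "q * f \<in> lspan (gen_subring X) F"
proof -
  have "(\<Sum>g\<in>F. (if g = f then q else 0) * g) = (\<Sum>g\<in>F. if g = f then q * f else 0)"
    by (rule sum.cong) auto
  also have "\<dots> = q * f"
    using assms(1,2) by simp
  finally have "(\<Sum>g\<in>F. (if g = f then q else 0) * g) = q * f" .
  then show ?thesis
    unfolding lspan_def using assms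
    by (auto intro!: exI[of _ "\<lambda>g. if g = f then q else 0"] gen_subring_zero)
qed

lemma lspan_induct:
  assumes "x \<in> lspan (gen_subring X) F" "finite F"
    and "0 \<in> M" "\<And>a b. a \<in> M \<Longrightarrow> b \<in> M \<Longrightarrow> a + b \<in> M"
    and "\<And>g f. g \<in> gen_subring X \<Longrightarrow> f \<in> F \<Longrightarrow> g * f \<in> M"
  shows "x \<in> M"
proof -
  obtain r where r: "\<forall>f\<in>F. r f \<in> gen_subring X" "x = (\<Sum>f\<in>F. r f * f)"
    using assms(1) unfolding lspan_def by blast
  have "finite F' \<Longrightarrow> F' \<subseteq> F \<Longrightarrow> (\<Sum>f\<in>F'. r f * f) \<in> M" for F'
    by (induction F' rule: finite_induct) (use r assms(3-5) in auto)
  then show ?thesis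
    using r assms(2) by blast
qed

lemma lspan_mult_lspan:
  fixes g f :: "'a::ring_1 mpoly"
  assumes "g \<in> lspan (gen_subring X) H" "f \<in> F" "finite H" "finite F"
  shows "g * f \<in> lspan (gen_subring X) ((\<lambda>(h, f). h * f) ` (H \<times> F))"
proof -
  have "g \<in> {x. x * f \<in> lspan (gen_subring X) ((\<lambda>(h, f). h * f) ` (H \<times> F))}"
  proof (rule lspan_induct[OF assms(1,3)])
    fix q h assume "q \<in> gen_subring X" "h \<in> H"
    then show "q * h \<in> {x. x * f \<in> lspan (gen_subring X) ((\<lambda>(h, f). h * f) ` (H \<times> F))}"
      using assms(2-4) by (auto simp: mult.assoc intro: lspan_term)
  qed (auto simp: distrib_right intro: lspan_zero lspan_add)
  then show ?thesis
    by simp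
qed

lemma finite_over_self: "finite_over (gen_subring X) (gen_subring X)"
  unfolding finite_over_def
  by (intro exI[of _ "{1}"]) (auto intro: gen_subring_one)

lemma finite_over_trans:
  fixes S :: "'a::ring_1 mpoly set"
  assumes "finite_over S (gen_subring Y)" "finite_over (gen_subring Y) (gen_subring X)"
    and "gen_subring Y \<subseteq> S" "\<And>a b. a \<in> S \<Longrightarrow> b \<in> S \<Longrightarrow> a * b \<in> S"
  shows "finite_over S (gen_subring X)"
proof -
  obtain F where F: "finite F" "F \<subseteq> S" "S \<subseteq> lspan (gen_subring Y) F"
    using assms(1) unfolding finite_over_iff_lspan by blast
  obtain H where H: "finite H" "H \<subseteq> gen_subring Y" "gen_subring Y \<subseteq> lspan (gen_subring X) H"
    using assms(2) unfolding finite_over_iff_lspan by blast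
  define HF where "HF = (\<lambda>(h, f). h * f) ` (H \<times> F)"
  have HF: "finite HF" "HF \<subseteq> S"
    using F H assms(3) by (auto simp: HF_def intro!: assms(4))
  have products: "g * f \<in> lspan (gen_subring X) HF" if "g \<in> gen_subring Y" "f \<in> F" for g f
    using that F(1) H by (auto simp: HF_def intro: lspan_mult_lspan)
  have "S \<subseteq> lspan (gen_subring X) HF"
  proof
    fix s assume "s \<in> S"
    then have "s \<in> lspan (gen_subring Y) F"
      using F(3) by blast
    then show "s \<in> lspan (gen_subring X) HF"
      by (rule lspan_induct[OF _ F(1)]) (auto intro: lspan_zero lspan_add products)
  qed
  with HF show ?thesis
    unfolding finite_over_iff_lspan by blast
qed


section \<open>Elements of bounded degree in a central element\<close>

definition low_degree :: "'a::ring_1 mpoly set \<Rightarrow> 'a mpoly \<Rightarrow> nat \<Rightarrow> 'a mpoly set" where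
  "low_degree W z K = lspan (gen_subring W) ((\<lambda>j. z ^ j) ` {..<K})"

definition monic_of_degree :: "'a::ring_1 mpoly set \<Rightarrow> 'a mpoly \<Rightarrow> nat \<Rightarrow> 'a mpoly \<Rightarrow> bool" where
  "monic_of_degree W z p x \<longleftrightarrow> x - z ^ p \<in> low_degree W z p"

lemma low_degree_term: "g \<in> gen_subring W \<Longrightarrow> j < K \<Longrightarrow> g * z ^ j \<in> low_degree W z K"
  unfolding low_degree_def by (rule lspan_term) auto

lemma low_degree_zero: "0 \<in> low_degree W z K"
  unfolding low_degree_def by (rule lspan_zero)

lemma low_degree_add: "x \<in> low_degree W z K \<Longrightarrow> y \<in> low_degree W z K \<Longrightarrow> x + y \<in> low_degree W z K"
  unfolding low_degree_def by (rule lspan_add)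

lemma low_degree_lmult: "g \<in> gen_subring W \<Longrightarrow> x \<in> low_degree W z K \<Longrightarrow> g * x \<in> low_degree W z K"
  unfolding low_degree_def by (rule lspan_lmult)

lemma low_degree_neg: "x \<in> low_degree W z K \<Longrightarrow> - x \<in> low_degree W z K"
  using low_degree_lmult[OF gen_neg[OF gen_subring_one]] by simp

lemma low_degree_diff: "x \<in> low_degree W z K \<Longrightarrow> y \<in> low_degree W z K \<Longrightarrow> x - y \<in> low_degree W z K"
  unfolding diff_conv_add_uminus by (intro low_degree_add low_degree_neg)

lemma low_degree_sum:
  "finite I \<Longrightarrow> (\<And>i. i \<in> I \<Longrightarrow> x i \<in> low_degree W z K) \<Longrightarrow> sum x I \<in> low_degree W z K"
  by (induction I rule: finite_induct) (auto intro: low_degree_zero low_degree_add)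

lemma low_degree_induct:
  assumes "x \<in> low_degree W z K" "0 \<in> M" "\<And>a b. a \<in> M \<Longrightarrow> b \<in> M \<Longrightarrow> a + b \<in> M"
    and "\<And>g j. g \<in> gen_subring W \<Longrightarrow> j < K \<Longrightarrow> g * z ^ j \<in> M"
  shows "x \<in> M"
  using assms(1) unfolding low_degree_def
  by (rule lspan_induct) (use assms(2-4) in auto)

lemma low_degree_mono: "x \<in> low_degree W z K \<Longrightarrow> K \<le> K' \<Longrightarrow> x \<in> low_degree W z K'"
  by (erule low_degree_induct) (auto intro: low_degree_zero low_degree_add low_degree_term)

lemma monic_mem_low_degree:
  assumes "monic_of_degree W z p x" "p < K"
  shows "x \<in> low_degree W z K"
proof -
  have "x - z ^ p \<in> low_degree W z K"
    using assms low_degree_mono[of "x - z ^ p" W z p K] unfolding monic_of_degree_def by simp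
  moreover have "1 * z ^ p \<in> low_degree W z K"
    using assms(2) by (rule low_degree_term[OF gen_subring_one])
  ultimately have "(x - z ^ p) + 1 * z ^ p \<in> low_degree W z K"
    by (rule low_degree_add)
  then show ?thesis
    by simp
qed

lemma monic_power_self: "monic_of_degree W z p (z ^ p)"
  unfolding monic_of_degree_def by (simp add: low_degree_zero)

lemma monic_add_power: "w \<in> gen_subring W \<Longrightarrow> 0 < p \<Longrightarrow> monic_of_degree W z p (w + z ^ p)"
  unfolding monic_of_degree_def using low_degree_term[of w W 0 p z] by simp

lemma power_low_degree_if_monic_mem:
  fixes c :: "'a::division_ring"
  assumes "monic_of_degree W z K x" "const c * x \<in> low_degree W z K" "c \<noteq> 0"
  shows "z ^ K \<in> low_degree W z K"
proof -
  have "x = const (inverse c) * (const c * x)"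
    using assms(3) by (simp add: mult.assoc[symmetric] const_mult_const)
  then have "x \<in> low_degree W z K"
    using assms(2) by (metis low_degree_lmult gen_const)
  moreover have "x - z ^ K \<in> low_degree W z K"
    using assms(1) unfolding monic_of_degree_def .
  ultimately have "x - (x - z ^ K) \<in> low_degree W z K"
    by (rule low_degree_diff)
  then show ?thesis
    by simp
qed

lemma power_low_degree_if_monic_relation:
  fixes c :: "'b \<Rightarrow> 'a::division_ring" and x :: "'b \<Rightarrow> 'a mpoly"
  assumes E: "finite E" "E \<noteq> {}" and c: "\<forall>e\<in>E. c e \<noteq> 0"
    and monic: "\<forall>e\<in>E. monic_of_degree W z (deg e) (x e)" and inj: "inj_on deg E"
    and relation: "(\<Sum>e\<in>E. const (c e) * x e) = 0"
  shows "z ^ Max (deg ` E) \<in> low_degree W z (Max (deg ` E))"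
proof -
  define K where "K = Max (deg ` E)"
  have "K \<in> deg ` E"
    unfolding K_def using E by (intro Max_in) auto
  then obtain e' where e': "e' \<in> E" "deg e' = K"
    by blast
  define rest where "rest = (\<Sum>e\<in>E - {e'}. const (c e) * x e)"
  have rest: "rest \<in> low_degree W z K"
    unfolding rest_def
  proof (rule low_degree_sum)
    fix e assume e: "e \<in> E - {e'}"
    have "deg e \<le> K"
      unfolding K_def using E(1) e by (intro Max_ge) auto
    moreover have "deg e \<noteq> deg e'"
      using inj e e'(1) by (auto dest: inj_onD)
    ultimately have "deg e < K"
      using e'(2) by simp
    then show "const (c e) * x e \<in> low_degree W z K"
      using monic e by (intro low_degree_lmult[OF gen_const] monic_mem_low_degree) auto
  qed (use E in simp)
  have "const (c e') * x e' = - rest"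
    using relation sum.remove[OF E(1) e'(1), of "\<lambda>e. const (c e) * x e"]
    by (simp add: rest_def eq_neg_iff_add_eq_0)
  with rest have "const (c e') * x e' \<in> low_degree W z K"
    by (simp add: low_degree_neg)
  then show ?thesis
    using monic c e' unfolding K_def[symmetric] by (intro power_low_degree_if_monic_mem) auto
qed

context
  fixes W :: "'a::ring_1 mpoly set" and z :: "'a mpoly"
  assumes z: "z \<in> center"
begin

lemma low_degree_power_mult:
  assumes "x \<in> low_degree W z K"
  shows "z ^ q * x \<in> low_degree W z (q + K)"
proof -
  have "x \<in> {x. z ^ q * x \<in> low_degree W z (q + K)}"
  proof (rule low_degree_induct[OF assms])
    fix g j assume "g \<in> gen_subring W" "j < K"
    moreover have "z ^ q * (g * z ^ j) = g * z ^ (q + j)"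
      using centerD[OF center_power[OF z], of q g] by (simp add: mult.assoc[symmetric] power_add)
    ultimately show "g * z ^ j \<in> {x. z ^ q * x \<in> low_degree W z (q + K)}"
      by (simp add: low_degree_term)
  qed (auto simp: distrib_left low_degree_zero low_degree_add)
  then show ?thesis
    by simp
qed

lemma low_degree_mult:
  assumes "x \<in> low_degree W z p" and y: "y \<in> low_degree W z q"
  shows "x * y \<in> low_degree W z (p + q)"
proof -
  have "x \<in> {x. x * y \<in> low_degree W z (p + q)}"
  proof (rule low_degree_induct[OF assms(1)])
    fix g j assume g: "g \<in> gen_subring W" and "j < p"
    then have "z ^ j * y \<in> low_degree W z (p + q)"
      using low_degree_mono[OF low_degree_power_mult[OF y, of j]] by simp
    with g show "g * z ^ j \<in> {x. x * y \<in> low_degree W z (p + q)}"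
      by (simp add: mult.assoc low_degree_lmult)
  qed (auto simp: distrib_right low_degree_zero low_degree_add)
  then show ?thesis
    by simp
qed

lemma monic_mult:
  assumes "monic_of_degree W z p x" "monic_of_degree W z q y"
  shows "monic_of_degree W z (p + q) (x * y)"
proof -
  define u where "u = x - z ^ p"
  define v where "v = y - z ^ q"
  have u: "u \<in> low_degree W z p" and v: "v \<in> low_degree W z q"
    using assms unfolding monic_of_degree_def u_def v_def by auto
  have "x * y - z ^ (p + q) = z ^ p * v + z ^ q * u + u * v"
    using centerD[OF center_power[OF z, of q], of x] centerD[OF center_power[OF z, of q], of "z ^ p"]
    by (simp add: u_def v_def algebra_simps power_add)
  moreover have "z ^ p * v \<in> low_degree W z (p + q)"
    using low_degree_power_mult[OF v] .
  moreover have "z ^ q * u \<in> low_degree W z (p + q)"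
    using low_degree_power_mult[OF u, of q] by (simp add: add.commute)
  moreover have "u * v \<in> low_degree W z (p + q)"
    using low_degree_mult[OF u v] .
  ultimately show ?thesis
    unfolding monic_of_degree_def by (simp add: low_degree_add)
qed

lemma monic_power: "monic_of_degree W z p x \<Longrightarrow> monic_of_degree W z (k * p) (x ^ k)"
  by (induction k) (auto simp: monic_mult monic_power_self[of W z 0, simplified])

lemma monic_monomial_in:
  assumes "\<And>i. i < r \<Longrightarrow> monic_of_degree W z (d i) (x i)"
  shows "monic_of_degree W z (\<Sum>i<r. e i * d i) (monomial_in r x e)"
  using assms
proof (induction r)
  case 0
  then show ?case
    using monic_power_self[of W z 0] by (simp add: monomial_in_def)
next
  case (Suc r)
  then have "monic_of_degree W z (\<Sum>i<r. e i * d i) (monomial_in r x e)"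
    by simp
  moreover have "monic_of_degree W z (e r * d r) (x r ^ e r)"
    using Suc.prems by (simp add: monic_power)
  ultimately have "monic_of_degree W z ((\<Sum>i<r. e i * d i) + e r * d r)
      (monomial_in r x e * x r ^ e r)"
    by (rule monic_mult)
  then show ?case
    by (simp add: monomial_in_def)
qed

context
  fixes K :: nat
  assumes zK: "z ^ K \<in> low_degree W z K"
begin

lemma low_degree_subset: "low_degree W z p \<subseteq> low_degree W z K"
proof (induction p)
  case 0
  have "low_degree W z 0 = {0}"
    by (auto simp: low_degree_def lspan_def)
  then show ?case
    using low_degree_zero by simp
next
  case (Suc p)
  show ?case
  proof
    fix x assume "x \<in> low_degree W z (Suc p)"
    then show "x \<in> low_degree W z K"
    proof (rule low_degree_induct)
      fix g j assume g: "g \<in> gen_subring W" and j: "j < Suc p"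
      show "g * z ^ j \<in> low_degree W z K"
      proof (cases "j < K")
        case True
        with g show ?thesis by (rule low_degree_term)
      next
        case False
        then have "z ^ j = z ^ (j - K) * z ^ K"
          by (simp flip: power_add)
        also have "\<dots> \<in> low_degree W z j"
          using low_degree_power_mult[OF zK, of "j - K"] False by simp
        finally have "z ^ j \<in> low_degree W z K"
          using Suc.IH low_degree_mono[of _ W z j p] j by auto
        with g show ?thesis
          by (rule low_degree_lmult)
      qed
    qed (auto intro: low_degree_zero low_degree_add)
  qed
qed

lemma power_mem_low_degree: "z ^ j \<in> low_degree W z K"
proof -
  have "1 * z ^ j \<in> low_degree W z (Suc j)"
    by (rule low_degree_term[OF gen_subring_one]) simp
  then show ?thesis
    using low_degree_subset by auto
qed

lemma monic_mem_low_degree_if_power: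
  assumes "monic_of_degree W z p x"
  shows "x \<in> low_degree W z K"
proof -
  have "(x - z ^ p) + z ^ p \<in> low_degree W z K"
    using assms low_degree_subset unfolding monic_of_degree_def
    by (blast intro: low_degree_add power_mem_low_degree)
  then show ?thesis
    by simp
qed

lemma gen_subring_subset_low_degree:
  "Y \<subseteq> low_degree W z K \<Longrightarrow> gen_subring Y \<subseteq> low_degree W z K"
proof (rule gen_subring_least)
  show "const d \<in> low_degree W z K" for d
    using low_degree_lmult[OF gen_const power_mem_low_degree, of d 0] by simp
  show "p * q \<in> low_degree W z K" if "p \<in> low_degree W z K" "q \<in> low_degree W z K" for p q
    using low_degree_mult[OF that] low_degree_subset by blast
qed (auto intro: low_degree_add low_degree_neg)

lemma finite_over_if_power_low_degree:
  assumes "z \<in> gen_subring Y" "Y \<subseteq> low_degree W z K"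
  shows "finite_over (gen_subring Y) (gen_subring W)"
  unfolding finite_over_iff_lspan
proof (intro exI conjI)
  show "finite ((\<lambda>j. z ^ j) ` {..<K})" by simp
  show "(\<lambda>j. z ^ j) ` {..<K} \<subseteq> gen_subring Y"
    using assms(1) by (auto intro: gen_subring_power)
  show "gen_subring Y \<subseteq> lspan (gen_subring W) ((\<lambda>j. z ^ j) ` {..<K})"
    using gen_subring_subset_low_degree[OF assms(2)] unfolding low_degree_def .
qed

end

end


section \<open>Noether normalization for central generators\<close>

lemma alg_indep_0: "alg_indep 0 a"
  unfolding alg_indep_def
proof (rule allI, intro impI)
  fix c :: "(nat \<Rightarrow> nat) \<Rightarrow> 'a"
  assume "finite {e. c e \<noteq> 0}"
    and supp: "\<forall>e. c e \<noteq> 0 \<longrightarrow> (\<forall>i\<ge>0. e i = 0)"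
    and relation: "(\<Sum>e\<in>{e. c e \<noteq> 0}. const (c e) * monomial_in 0 a e) = 0"
  have zero: "e = (\<lambda>_. 0)" if "c e \<noteq> 0" for e
    using supp that by auto
  then have "{e. c e \<noteq> 0} \<subseteq> {\<lambda>_. 0}"
    by blast
  then have "const (c (\<lambda>_. 0)) = 0"
    using relation by (cases "c (\<lambda>_. 0) = 0") (auto simp: subset_singleton_iff monomial_in_def)
  then show "\<forall>e. c e = 0"
    using zero by (metis const_eq_0_iff)
qed

text \<open>Once the elements \<open>z\<^sub>j - z\<^sub>0 ^ N ^ j\<close> are adjoined, the monomial with exponent
  vector \<open>e\<close> is monic in \<open>z\<^sub>0\<close> of degree \<open>\<Sum>\<^sub>i e\<^sub>i N\<^sup>i\<close>; for \<open>N\<close> exceeding all exponents in a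
  relation these degrees are pairwise distinct, so a single monomial has top degree.\<close>

lemma base_expansion_inj:
  fixes N :: nat
  assumes "\<forall>i<r. e i < N" "\<forall>i<r. f i < N" "(\<Sum>i<r. e i * N ^ i) = (\<Sum>i<r. f i * N ^ i)"
  shows "\<forall>i<r. e i = f i"
  using assms
proof (induction r arbitrary: e f)
  case (Suc r)
  have expand: "(\<Sum>i<Suc r. g i * N ^ i) = g 0 + N * (\<Sum>i<r. g (Suc i) * N ^ i)"
    for g :: "nat \<Rightarrow> nat"
    unfolding sum.lessThan_Suc_shift by (simp add: sum_distrib_left mult.left_commute)
  have "e 0 = (\<Sum>i<Suc r. e i * N ^ i) mod N" "f 0 = (\<Sum>i<Suc r. f i * N ^ i) mod N"
    using Suc.prems(1,2) unfolding expand by simp_all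
  then have e0: "e 0 = f 0"
    using Suc.prems(3) by simp
  moreover have "0 < N"
    using Suc.prems(1)[rule_format, of 0] by simp
  ultimately have "(\<Sum>i<r. e (Suc i) * N ^ i) = (\<Sum>i<r. f (Suc i) * N ^ i)"
    using Suc.prems(3) unfolding expand by simp
  then have "\<forall>i<r. e (Suc i) = f (Suc i)"
    using Suc.prems by (intro Suc.IH) auto
  with e0 show ?case
    by (auto simp: less_Suc_eq_0_disj)
qed simp

lemma obtain_inj_on_base_expansion:
  fixes E :: "(nat \<Rightarrow> nat) set"
  assumes "finite E" and supp: "\<forall>e\<in>E. \<forall>i\<ge>r. e i = 0"
  obtains N :: nat where "0 < N" "inj_on (\<lambda>e. \<Sum>i<r. e i * N ^ i) E"
proof
  define N where "N = Suc (\<Sum>e\<in>E. \<Sum>i<r. e i)"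
  have digit: "e i < N" if "e \<in> E" "i < r" for e i
  proof -
    have "e i \<le> (\<Sum>i<r. e i)"
      using that by (intro member_le_sum) auto
    also have "\<dots> \<le> (\<Sum>e\<in>E. \<Sum>i<r. e i)"
      using that assms(1) by (intro member_le_sum) auto
    finally show ?thesis
      unfolding N_def by simp
  qed
  show "0 < N"
    unfolding N_def by simp
  show "inj_on (\<lambda>e. \<Sum>i<r. e i * N ^ i) E"
  proof (rule inj_onI, rule ext)
    fix e f i
    assume e: "e \<in> E" and f: "f \<in> E" and eq: "(\<Sum>i<r. e i * N ^ i) = (\<Sum>i<r. f i * N ^ i)"
    show "e i = f i"
    proof (cases "i < r")
      case True
      then show ?thesis
        using base_expansion_inj[of r e N f] digit[OF e] digit[OF f] eq by blast
    next
      case False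
      then show ?thesis
        using supp[rule_format, OF e, of i] supp[rule_format, OF f, of i] by simp
    qed
  qed
qed

lemma obtain_separated_relation:
  fixes z :: "nat \<Rightarrow> 'a::ring_1 mpoly"
  assumes "\<not> alg_indep r z"
  obtains E and c :: "(nat \<Rightarrow> nat) \<Rightarrow> 'a" and N :: nat
  where "finite E" "E \<noteq> {}" "\<forall>e\<in>E. c e \<noteq> 0" "0 < N" "inj_on (\<lambda>e. \<Sum>i<r. e i * N ^ i) E"
    "(\<Sum>e\<in>E. const (c e) * monomial_in r z e) = 0"
proof -
  obtain c where fin: "finite {e. c e \<noteq> 0}" and supp: "\<forall>e. c e \<noteq> 0 \<longrightarrow> (\<forall>i\<ge>r. e i = 0)"
    and relation: "(\<Sum>e\<in>{e. c e \<noteq> 0}. const (c e) * monomial_in r z e) = 0"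
    and nonzero: "\<exists>e. c e \<noteq> 0"
    using assms unfolding alg_indep_def by blast
  obtain N where "0 < N" "inj_on (\<lambda>e. \<Sum>i<r. e i * N ^ i) {e. c e \<noteq> 0}"
    using obtain_inj_on_base_expansion[of "{e. c e \<noteq> 0}" r] fin supp by blast
  moreover have "{e. c e \<noteq> 0} \<noteq> {}"
    using nonzero by blast
  ultimately show ?thesis
    using that fin relation by blast
qed

lemma monic_nagata_substitution:
  fixes z :: "nat \<Rightarrow> 'a::ring_1 mpoly"
  assumes "0 < N" and "\<And>j. j < l \<Longrightarrow> z (Suc j) - z 0 ^ N ^ Suc j \<in> gen_subring W"
    and "i < Suc l"
  shows "monic_of_degree W (z 0) (N ^ i) (z i)"
proof (cases i)
  case 0
  then show ?thesis
    using monic_power_self[of W "z 0" 1] by simp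
next
  case (Suc j)
  then have "monic_of_degree W (z 0) (N ^ i) ((z (Suc j) - z 0 ^ N ^ i) + z 0 ^ N ^ i)"
    using assms by (intro monic_add_power) auto
  then show ?thesis
    using Suc by simp
qed

lemma nagata_step:
  fixes z :: "nat \<Rightarrow> 'a::division_ring mpoly"
  assumes cz: "z ` {..<Suc l} \<subseteq> center" and dep: "\<not> alg_indep (Suc l) z"
  obtains w where "w ` {..<l} \<subseteq> gen_subring (z ` {..<Suc l}) \<inter> center"
    "finite_over (gen_subring (z ` {..<Suc l})) (gen_subring (w ` {..<l}))"
proof -
  obtain E c N where E: "finite E" "E \<noteq> {}" and c: "\<forall>e\<in>E. c e \<noteq> 0" and N: "0 < N"
    and inj: "inj_on (\<lambda>e. \<Sum>i<Suc l. e i * N ^ i) E"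
    and relation: "(\<Sum>e\<in>E. const (c e) * monomial_in (Suc l) z e) = 0"
    using obtain_separated_relation[OF dep] .
  define w where "w j = z (Suc j) - z 0 ^ N ^ Suc j" for j
  define W where "W = w ` {..<l}"
  have z0: "z 0 \<in> center"
    using cz by (simp add: image_subset_iff)
  have monic_z: "monic_of_degree W (z 0) (N ^ i) (z i)" if "i < Suc l" for i
    by (rule monic_nagata_substitution[OF N _ that]) (auto simp: W_def w_def intro: gen_elem)
  define K where "K = Max ((\<lambda>e. \<Sum>i<Suc l. e i * N ^ i) ` E)"
  have zK: "z 0 ^ K \<in> low_degree W (z 0) K"
    unfolding K_def
  proof (rule power_low_degree_if_monic_relation[where c = c and x = "monomial_in (Suc l) z"])
    show "\<forall>e\<in>E. monic_of_degree W (z 0) (\<Sum>i<Suc l. e i * N ^ i) (monomial_in (Suc l) z e)"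
      using monic_monomial_in[OF z0, of "Suc l" W "\<lambda>i. N ^ i" z] monic_z by blast
  qed (fact E c inj relation)+
  have "z ` {..<Suc l} \<subseteq> low_degree W (z 0) K"
    using monic_z monic_mem_low_degree_if_power[OF z0 zK] by blast
  then have "finite_over (gen_subring (z ` {..<Suc l})) (gen_subring W)"
    by (rule finite_over_if_power_low_degree[OF z0 zK, rotated]) (auto intro: gen_elem)
  moreover have "W \<subseteq> gen_subring (z ` {..<Suc l}) \<inter> center"
  proof
    fix x assume "x \<in> W"
    then obtain j where j: "j < l" "x = w j"
      by (auto simp: W_def)
    then have "z (Suc j) \<in> gen_subring (z ` {..<Suc l})" "z 0 \<in> gen_subring (z ` {..<Suc l})"
      by (auto intro: gen_elem)
    moreover have "z (Suc j) \<in> center"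
      using cz j(1) by auto
    ultimately show "x \<in> gen_subring (z ` {..<Suc l}) \<inter> center"
      using z0 by (simp add: j w_def gen_subring_diff gen_subring_power center_diff center_power)
  qed
  ultimately show ?thesis
    using that unfolding W_def by blast
qed

lemma noether_normalization_central:
  fixes z :: "nat \<Rightarrow> 'a::division_ring mpoly"
  assumes "z ` {..<r} \<subseteq> center"
  shows "\<exists>m a. a ` {..<m} \<subseteq> gen_subring (z ` {..<r}) \<inter> center \<and> alg_indep m a \<and>
    finite_over (gen_subring (z ` {..<r})) (gen_subring (a ` {..<m}))"
  using assms
proof (induction r arbitrary: z)
  case 0
  show ?case
    using alg_indep_0 finite_over_self by fastforce
next
  case (Suc l)
  show ?case
  proof (cases "alg_indep (Suc l) z")
    case True
    then show ?thesis
      using Suc.prems finite_over_self by (auto intro: gen_elem)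
  next
    case False
    obtain w where w: "w ` {..<l} \<subseteq> gen_subring (z ` {..<Suc l}) \<inter> center"
      and finite_w: "finite_over (gen_subring (z ` {..<Suc l})) (gen_subring (w ` {..<l}))"
      using nagata_step[OF Suc.prems False] .
    obtain m a where a: "a ` {..<m} \<subseteq> gen_subring (w ` {..<l}) \<inter> center" "alg_indep m a"
      and finite_a: "finite_over (gen_subring (w ` {..<l})) (gen_subring (a ` {..<m}))"
      using Suc.IH w by blast
    have sub: "gen_subring (w ` {..<l}) \<subseteq> gen_subring (z ` {..<Suc l})"
      using w by (intro gen_subring_subset) auto
    have "finite_over (gen_subring (z ` {..<Suc l})) (gen_subring (a ` {..<m}))"
      using finite_w finite_a sub gen_mult by (rule finite_over_trans)
    with a sub show ?thesis
      by blast
  qed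
qed


theorem proposition4p6:
  fixes n :: nat and A :: "('a::division_ring) mpoly set"
  assumes "centrally_finite TYPE('a)"
    and "finite A"
    and "A \<subseteq> poly_ring n"
  shows "centrally_normalizable (gen_subring A)"
proof -
  obtain Z where Z: "finite Z" "Z \<subseteq> center" "gen_subring Z = gen_subring A"
    using gen_subring_central_generators[OF assms(2)] .
  obtain r and z :: "nat \<Rightarrow> 'a mpoly" where Z_eq: "Z = z ` {..<r}"
    using finite_imp_nat_seg_image_inj_on[OF Z(1)] unfolding lessThan_def by blast
  have "gen_subring (z ` {..<r}) = gen_subring A"
    using Z(3) Z_eq by simp
  moreover have "z ` {..<r} \<subseteq> center"
    using Z(2) Z_eq by simp
  ultimately obtain m a where a: "a ` {..<m} \<subseteq> gen_subring A \<inter> center" "alg_indep m a"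
    and finite: "finite_over (gen_subring A) (gen_subring (a ` {..<m}))"
    using noether_normalization_central by metis
  have "a i \<in> gen_subring A" "a i \<in> center" if "i < m" for i
    using a(1) that by auto
  then show ?thesis
    unfolding centrally_normalizable_def
    using a(2) finite by (intro exI[of _ m] exI[of _ a]) (simp add: centerD)
qed

end
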